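(* For every $n\ge1$, $|\mathcal{T}_n^{(1,n)}|=1$, and for $n\ge2$ and $1\le p\le n-1$, $|\mathcal{T}_n^{(1,p)}|=\sum_{r=1}^{n}|\mathcal{T}_{n-1}^{(r,p)}|$.
   Context: For $m\ge1$, $1\le p\le m$: sites are $0,\dots,m+1$; a configuration in $\mathcal{S}(m,p)$ places $m+1$ distinct chips labeled $1,\dots,m+1$ with sites $0,m+1$ empty, one chip at each site of $\{1,\dots,m\}\setminus\{p\}$ and two chips at site $p$. Toppling: while some site holds at least two chips, choose such a site $i$ and two chips $\alpha<\beta$ there and move $\alpha$ to $i-1$, $\beta$ to $i+1$; it is known this terminates with at most one chip per site and the final configuration is independent of the choices. For $\pi\in S_m$ and $r\in[m+1]$, $\pi^{(r,p)}$ places at site $i$ ($1\le i\le m$) chip $\pi_i$ if $\pi_i<r$ and $\pi_i+1$ otherwise, plus chip $r$ at site $p$. $\mathcal{T}_m^{(r,p)}$ is the set of $\pi\in S_m$ such that the final configuration of $\pi^{(r,p)}$, read left to right, is $1,2,\dots,m+1$. *)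

theory Defs
  imports "HOL-Library.Multiset" "HOL-Combinatorics.Permutations"
begin

type_synonym config = "int \<Rightarrow> nat multiset"

definition topple_step :: "config \<Rightarrow> config \<Rightarrow> bool" where
  "topple_step c c' \<longleftrightarrow> (\<exists>i a b. a < b \<and> {#a, b#} \<subseteq># c i \<and>
     c' = c(i := c i - {#a, b#}, i - 1 := c (i - 1) + {#a#}, i + 1 := c (i + 1) + {#b#}))"

definition stable :: "config \<Rightarrow> bool" where
  "stable c \<longleftrightarrow> (\<forall>i. size (c i) \<le> 1)"

text \<open>The final configuration (known to exist and to be independent of choices).\<close>
definition final_config :: "config \<Rightarrow> config" where
  "final_config c = (THE c'. topple_step\<^sup>*\<^sup>* c c' \<and> stable c')"

definition read_config :: "config \<Rightarrow> nat list" where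
  "read_config c = concat (map (\<lambda>i. sorted_list_of_multiset (c i))
                              (sorted_list_of_set {i. c i \<noteq> {#}}))"

definition init_config :: "nat \<Rightarrow> nat \<Rightarrow> nat \<Rightarrow> (nat \<Rightarrow> nat) \<Rightarrow> config" where
  "init_config m r p \<pi> = (\<lambda>i::int.
     (if 1 \<le> i \<and> i \<le> int m
      then {# (if \<pi> (nat i) < r then \<pi> (nat i) else \<pi> (nat i) + 1) #} else {#})
     + (if i = int p then {#r#} else {#}))"

definition Tset :: "nat \<Rightarrow> nat \<Rightarrow> nat \<Rightarrow> (nat \<Rightarrow> nat) set" where
  "Tset m r p = {\<pi>. \<pi> permutes {1..m} \<and>
      read_config (final_config (init_config m r p \<pi>)) = [1..<m + 2]}"

end

theory Submission
  imports Defs "HOL-Library.Confluence"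
begin

text \<open>Toppling from a configuration of \<open>\<S>(m,p)\<close> terminates in a unique stable configuration:
the prefix sums of (number of chips minus one) stay in \<open>{-1, 0}\<close>, so two-chip sites are never
adjacent and distinct topples commute, while every topple moves a zero of these prefix sums one
site to the left.

Since the order of topples is irrelevant, in \<open>\<pi>^(1,p)\<close> we first topple chip 1 down to site 0
(it is the smaller chip each time), where it stays forever. It leaves behind, after relabelling,
\<open>\<pi>\<^sub>1, \<dots>, \<pi>\<^sub>p\<close> at sites \<open>1, \<dots>, p\<close> and \<open>\<pi>\<^sub>p\<^sub>+\<^sub>1, \<dots>, \<pi>\<^sub>n\<close> at sites \<open>p, \<dots>, n - 1\<close>.
For \<open>p = n\<close> this is already stable, so only the identity sorts. For \<open>p < n\<close> it is
\<open>\<sigma>^(r,p)\<close> with \<open>r = \<pi>\<^sub>p\<^sub>+\<^sub>1\<close> and \<open>\<sigma>\<close> obtained from \<open>\<pi>\<close> by deleting the value \<open>r\<close>;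
this deletion maps the fibre \<open>\<pi>\<^sub>p\<^sub>+\<^sub>1 = r\<close> of \<open>\<T>\<^sub>n^(1,p)\<close> bijectively onto \<open>\<T>\<^sub>n\<^sub>-\<^sub>1^(r,p)\<close>.\<close>

definition topple_at :: "config \<Rightarrow> int \<Rightarrow> nat \<Rightarrow> nat \<Rightarrow> config" where
  "topple_at c i a b =
     c(i := c i - {#a, b#}, i - 1 := c (i - 1) + {#a#}, i + 1 := c (i + 1) + {#b#})"

lemma topple_step_iff:
  "topple_step c c' \<longleftrightarrow> (\<exists>i a b. a < b \<and> {#a, b#} \<subseteq># c i \<and> c' = topple_at c i a b)"
  unfolding topple_step_def topple_at_def by blast

lemma topple_at_apply_far:
  "k \<noteq> i \<Longrightarrow> k \<noteq> i + 1 \<Longrightarrow> k \<noteq> i - 1 \<Longrightarrow> topple_at c i a b k = c k"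
  unfolding topple_at_def by auto

lemma topple_at_commute:
  assumes "j \<noteq> i" "j \<noteq> i + 1" "j \<noteq> i - 1"
  shows "topple_at (topple_at c i a b) j a' b' = topple_at (topple_at c j a' b') i a b"
  using assms unfolding topple_at_def by (simp add: fun_eq_iff fun_upd_apply add_ac)

lemma stable_imp_no_topple_step:
  assumes "stable c"
  shows "\<not> topple_step c c'"
proof
  assume "topple_step c c'"
  then obtain i a b where "{#a, b#} \<subseteq># c i" unfolding topple_step_iff by blast
  then have "2 \<le> size (c i)" using size_mset_mono[of "{#a, b#}" "c i"] by simp
  moreover have "size (c i) \<le> 1" using assms unfolding stable_def by blast
  ultimately show False by linarith
qed

definition excess :: "int \<Rightarrow> config \<Rightarrow> int \<Rightarrow> int" where
  "excess lo c j = (\<Sum>k\<in>{lo..j}. int (size (c k)) - 1)"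

definition distinct_chips :: "config \<Rightarrow> bool" where
  "distinct_chips c \<longleftrightarrow>
     (\<forall>i x. count (c i) x \<le> 1) \<and> (\<forall>i j x. x \<in># c i \<longrightarrow> x \<in># c j \<longrightarrow> i = j)"

text \<open>With \<open>lo = 0\<close> and \<open>hi = m + 1\<close> this holds on \<open>\<S>(m,p)\<close>, and it is preserved by toppling.\<close>
definition admissible :: "int \<Rightarrow> int \<Rightarrow> config \<Rightarrow> bool" where
  "admissible lo hi c \<longleftrightarrow> {i. c i \<noteq> {#}} \<subseteq> {lo..hi} \<and>
     (\<forall>j\<in>{lo..hi}. excess lo c j \<in> {-1, 0}) \<and> excess lo c hi = -1 \<and> distinct_chips c"

lemma admissibleD:
  assumes "admissible lo hi c"
  shows "\<And>i. i \<notin> {lo..hi} \<Longrightarrow> c i = {#}" "\<And>j. j \<in> {lo..hi} \<Longrightarrow> excess lo c j \<in> {-1, 0}"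
    "excess lo c hi = -1" "distinct_chips c"
  using assms unfolding admissible_def by auto

lemma excess_below: "j < lo \<Longrightarrow> excess lo c j = 0"
  unfolding excess_def by simp

lemma excess_step:
  assumes "lo \<le> j"
  shows "excess lo c j = excess lo c (j - 1) + int (size (c j)) - 1"
proof -
  have "{lo..j} = insert j {lo..j - 1}" using assms by auto
  then show ?thesis unfolding excess_def by simp
qed

lemma admissible_overfull_site:
  assumes "admissible lo hi c" "2 \<le> size (c i)"
  shows "size (c i) = 2 \<and> lo < i \<and> i < hi \<and> excess lo c (i - 1) = -1 \<and> excess lo c i = 0"
proof -
  have range: "lo \<le> i" "i \<le> hi"
    using admissibleD(1)[OF assms(1), of i] assms(2) by fastforce+
  note excess_vals = admissibleD(2,3)[OF assms(1)]
  have step: "excess lo c i = excess lo c (i - 1) + int (size (c i)) - 1"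
    using excess_step range by blast
  have "lo \<noteq> i"
  proof
    assume "lo = i"
    then have "excess lo c (i - 1) = 0" by (simp add: excess_below)
    then show False using step excess_vals range assms(2) by force
  qed
  then have "excess lo c (i - 1) \<in> {-1, 0}" "excess lo c i \<in> {-1, 0}"
    using excess_vals range by auto
  then have two: "size (c i) = 2 \<and> excess lo c (i - 1) = -1 \<and> excess lo c i = 0"
    using step assms(2) by auto
  then have "i \<noteq> hi" using excess_vals by auto
  then show ?thesis using two range \<open>lo \<noteq> i\<close> by auto
qed

lemma size_topple_at:
  assumes "{#a, b#} \<subseteq># c i"
  shows "int (size (topple_at c i a b k)) = int (size (c k))
           + (if k = i - 1 then 1 else 0) + (if k = i + 1 then 1 else 0) - (if k = i then 2 else 0)"
proof -
  have "2 \<le> size (c i)" using size_mset_mono[OF assms] by simp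
  then show ?thesis using assms unfolding topple_at_def by (auto simp: size_Diff_submset)
qed

lemma excess_topple_at:
  assumes "{#a, b#} \<subseteq># c i" "lo < i"
  shows "excess lo (topple_at c i a b) j =
           excess lo c j + (if j = i - 1 then 1 else 0) - (if j = i then 1 else 0)"
proof -
  have "excess lo (topple_at c i a b) j = excess lo c j + (\<Sum>k\<in>{lo..j}. if k = i - 1 then 1 else 0)
          + (\<Sum>k\<in>{lo..j}. if k = i + 1 then 1 else 0) - (\<Sum>k\<in>{lo..j}. if k = i then 2 else 0)"
    unfolding excess_def size_topple_at[of a b c i, OF assms(1)]
    by (simp add: sum.distrib sum_subtractf algebra_simps)
  also have "\<dots> = excess lo c j + (if i - 1 \<in> {lo..j} then 1 else 0)
          + (if i + 1 \<in> {lo..j} then 1 else 0) - (if i \<in> {lo..j} then 2 else 0)"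
    by (simp add: sum.delta')
  also have "\<dots> = excess lo c j + (if j = i - 1 then 1 else 0) - (if j = i then 1 else 0)"
    using assms(2) by auto
  finally show ?thesis .
qed

lemma distinct_chips_topple_at:
  assumes "distinct_chips c" "a < b" "{#a, b#} \<subseteq># c i"
  shows "distinct_chips (topple_at c i a b)"
proof -
  have "a \<in># c i" "b \<in># c i" using assms(3) by (auto dest: mset_subset_eqD)
  then have once: "count (c i) a = 1" "count (c i) b = 1"
    using assms(1) unfolding distinct_chips_def by (metis count_greater_zero_iff le_antisym One_nat_def Suc_leI)+
  have elsewhere: "a \<notin># c k" "b \<notin># c k" if "k \<noteq> i" for k
    using assms(1) \<open>a \<in># c i\<close> \<open>b \<in># c i\<close> that unfolding distinct_chips_def by blast+
  have count_eq: "count (topple_at c i a b k) x = (if x = a then (if k = i - 1 then 1 else 0)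
          else if x = b then (if k = i + 1 then 1 else 0) else count (c k) x)" for k x
    using assms(2) once elsewhere unfolding topple_at_def by (auto simp: not_in_iff)
  show ?thesis unfolding distinct_chips_def
  proof (intro conjI allI impI)
    fix k x
    show "count (topple_at c i a b k) x \<le> 1"
      using assms(1) unfolding count_eq distinct_chips_def by auto
  next
    fix k j x
    assume "x \<in># topple_at c i a b k" "x \<in># topple_at c i a b j"
    then show "k = j" using assms(1)
      unfolding distinct_chips_def count_greater_zero_iff[symmetric] count_eq
      by (auto split: if_splits)
  qed
qed

lemma admissible_topple_stepE:
  assumes "admissible lo hi c" "topple_step c c'"
  obtains i a b where "a < b" "c i = {#a, b#}" "c' = topple_at c i a b" "lo < i" "i < hi"
    "excess lo c (i - 1) = -1" "excess lo c i = 0"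
proof -
  obtain i a b where ab: "a < b" "{#a, b#} \<subseteq># c i" "c' = topple_at c i a b"
    using assms(2) unfolding topple_step_iff by blast
  have "2 \<le> size (c i)" using size_mset_mono[OF ab(2)] by simp
  note site = admissible_overfull_site[OF assms(1) this]
  have "c i = {#a, b#}"
  proof (rule ccontr)
    assume "c i \<noteq> {#a, b#}"
    then have "{#a, b#} \<subset># c i" using ab(2) by (simp add: subset_mset.le_less)
    then show False using mset_subset_size site by fastforce
  qed
  then show ?thesis using that ab site by blast
qed

lemma admissible_topple_step:
  assumes "admissible lo hi c" "topple_step c c'"
  shows "admissible lo hi c'"
proof -
  obtain i a b where ab: "a < b" "c i = {#a, b#}" "c' = topple_at c i a b" "lo < i" "i < hi"
    "excess lo c (i - 1) = -1" "excess lo c i = 0"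
    using admissible_topple_stepE[OF assms] .
  then have sub: "{#a, b#} \<subseteq># c i" by simp
  have "c' k = {#}" if "k \<notin> {lo..hi}" for k
  proof -
    have "k \<noteq> i" "k \<noteq> i - 1" "k \<noteq> i + 1" using that ab(4,5) by auto
    then show ?thesis using that admissibleD(1)[OF assms(1)] ab(3) topple_at_apply_far by simp
  qed
  then have "{k. c' k \<noteq> {#}} \<subseteq> {lo..hi}" by blast
  moreover have "\<forall>j\<in>{lo..hi}. excess lo c' j \<in> {-1, 0}" "excess lo c' hi = -1"
    using admissibleD(2,3)[OF assms(1)] ab(3-7) excess_topple_at[of a b c i, OF sub ab(4)] by auto
  moreover have "distinct_chips c'"
    using ab(3) distinct_chips_topple_at[OF admissibleD(4)[OF assms(1)] ab(1) sub] by simp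
  ultimately show ?thesis unfolding admissible_def by (intro conjI)
qed

lemma admissible_topple_steps:
  assumes "topple_step\<^sup>*\<^sup>* c c'" "admissible lo hi c"
  shows "admissible lo hi c'"
  using assms by (induction rule: rtranclp_induct) (auto intro: admissible_topple_step)

definition potential :: "int \<Rightarrow> int \<Rightarrow> config \<Rightarrow> nat" where
  "potential lo hi c = (\<Sum>j \<in> {j\<in>{lo..hi}. excess lo c j = 0}. nat (j - lo))"

lemma potential_topple_step_less:
  assumes "admissible lo hi c" "topple_step c c'"
  shows "potential lo hi c' < potential lo hi c"
proof -
  obtain i a b where ab: "a < b" "c i = {#a, b#}" "c' = topple_at c i a b" "lo < i" "i < hi"
    "excess lo c (i - 1) = -1" "excess lo c i = 0"
    using admissible_topple_stepE[OF assms] .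
  then have sub: "{#a, b#} \<subseteq># c i" by simp
  define Z where "Z = {j\<in>{lo..hi}. excess lo c j = 0}"
  have Z': "{j\<in>{lo..hi}. excess lo c' j = 0} = insert (i - 1) (Z - {i})"
    using ab(3-7) excess_topple_at[of a b c i, OF sub ab(4)] unfolding Z_def by auto
  have i: "i \<in> Z" "i - 1 \<notin> Z" using ab(4-7) unfolding Z_def by auto
  have fin: "finite Z" unfolding Z_def by (rule finite_subset[of _ "{lo..hi}"]) auto
  have "potential lo hi c' = nat (i - 1 - lo) + (\<Sum>j\<in>Z - {i}. nat (j - lo))"
    unfolding potential_def Z' using fin i by (subst sum.insert) auto
  moreover have "potential lo hi c = nat (i - lo) + (\<Sum>j\<in>Z - {i}. nat (j - lo))"
    unfolding potential_def Z_def[symmetric] by (rule sum.remove[OF fin i(1)])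
  moreover have "nat (i - 1 - lo) < nat (i - lo)" using ab(4) by simp
  ultimately show ?thesis by linarith
qed

lemma distinct_chips_pairE:
  assumes "distinct_chips c" "size (c i) = 2"
  obtains a b where "a < b" "c i = {#a, b#}"
proof -
  obtain x M where "c i = add_mset x M"
    using assms(2) size_eq_Suc_imp_eq_union[of "c i" 1] by auto
  moreover from this have "size M = 1" using assms(2) by simp
  ultimately obtain y where y: "c i = {#x, y#}" using size_1_singleton_mset by blast
  have "count (c i) x \<le> 1" using assms(1) unfolding distinct_chips_def by blast
  then have "x \<noteq> y" using y by auto
  then consider "x < y" | "y < x" by linarith
  then show ?thesis
    using that[of x y] that[of y x] y by cases (simp_all add: add_mset_commute)
qed

lemma admissible_stable_descendant:
  assumes "admissible lo hi c"
  shows "\<exists>s. topple_step\<^sup>*\<^sup>* c s \<and> stable s"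
  using assms
proof (induction "potential lo hi c" arbitrary: c rule: less_induct)
  case less
  show ?case
  proof (cases "stable c")
    case False
    then obtain i where "\<not> size (c i) \<le> 1" unfolding stable_def by blast
    then have "2 \<le> size (c i)" by simp
    then have "size (c i) = 2" using admissible_overfull_site[OF less.prems] by blast
    then obtain a b where ab: "a < b" "c i = {#a, b#}"
      using distinct_chips_pairE[OF admissibleD(4)[OF less.prems]] by blast
    then have step: "topple_step c (topple_at c i a b)"
      unfolding topple_step_iff by (intro exI conjI; simp)
    obtain s where "topple_step\<^sup>*\<^sup>* (topple_at c i a b) s" "stable s"
      using less.hyps[OF potential_topple_step_less[OF less.prems step]]
        admissible_topple_step[OF less.prems step] by blast
    then show ?thesis using step by (meson converse_rtranclp_into_rtranclp)
  qed blast
qed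

lemma admissible_diamond:
  assumes "admissible lo hi c" "topple_step c c1" "topple_step c c2" "c1 \<noteq> c2"
  shows "\<exists>d. topple_step c1 d \<and> topple_step c2 d"
proof -
  obtain i a b where i: "a < b" "c i = {#a, b#}" "c1 = topple_at c i a b"
    "excess lo c (i - 1) = -1" "excess lo c i = 0"
    using admissible_topple_stepE[OF assms(1,2)] by metis
  obtain j a' b' where j: "a' < b'" "c j = {#a', b'#}" "c2 = topple_at c j a' b'"
    "excess lo c (j - 1) = -1" "excess lo c j = 0"
    using admissible_topple_stepE[OF assms(1,3)] by metis
  have "i \<noteq> j"
  proof
    assume "i = j"
    then have "{#a, b#} = {#a', b'#}" using i j by simp
    then have "a = a' \<and> b = b'" using i(1) j(1)
      by (metis add_mset_eq_single add_eq_conv_ex order_less_imp_not_less)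
    then show False using assms(4) i j \<open>i = j\<close> by simp
  qed
  moreover have "j \<noteq> i + 1" "j \<noteq> i - 1" using i j by auto
  ultimately have far: "j \<noteq> i" "j \<noteq> i + 1" "j \<noteq> i - 1" by auto
  moreover have "i \<noteq> j + 1" "i \<noteq> j - 1" using far by auto
  ultimately have "c1 j = {#a', b'#}" "c2 i = {#a, b#}"
    using i(2,3) j(2,3) topple_at_apply_far by simp_all
  then have "topple_step c1 (topple_at c1 j a' b')" "topple_step c2 (topple_at c2 i a b)"
    using i(1) j(1) unfolding topple_step_iff by (intro exI conjI; simp)+
  moreover have "topple_at c1 j a' b' = topple_at c2 i a b"
    using topple_at_commute[OF far] i(3) j(3) by simp
  ultimately show ?thesis by metis
qed

lemma admissible_stable_descendant_unique:
  assumes "admissible lo hi c"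
    and "topple_step\<^sup>*\<^sup>* c s1" "stable s1" "topple_step\<^sup>*\<^sup>* c s2" "stable s2"
  shows "s1 = s2"
proof -
  define R where "R c c' \<longleftrightarrow> admissible lo hi c \<and> topple_step c c'" for c c'
  have "strong_confluentp R"
  proof
    fix x y z
    assume xy: "R x y" and xz: "R x z"
    show "\<exists>u. R\<^sup>*\<^sup>* y u \<and> R\<^sup>=\<^sup>= z u"
    proof (cases "y = z")
      case False
      then obtain d where "topple_step y d" "topple_step z d"
        using admissible_diamond xy xz unfolding R_def by blast
      moreover have "admissible lo hi y" "admissible lo hi z"
        using admissible_topple_step xy xz unfolding R_def by blast+
      ultimately have "R y d" "R z d" unfolding R_def by blast+
      then show ?thesis by (intro exI[of _ d]) simp
    qed (intro exI[of _ y], simp)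
  qed
  then have confluent: "confluentp R" by (rule strong_confluentp_imp_confluentp)
  have R_steps: "R\<^sup>*\<^sup>* c s" if "topple_step\<^sup>*\<^sup>* c s" for s
    using that
  proof (induction rule: rtranclp_induct)
    case (step s s')
    then show ?case using admissible_topple_steps[OF step.hyps(1) assms(1)] unfolding R_def
      by (simp add: rtranclp.rtrancl_into_rtrancl)
  qed simp
  have stable_end: "s = u" if "R\<^sup>*\<^sup>* s u" "stable s" for s u
    using that(1)
    by (cases rule: converse_rtranclpE) (use that(2) stable_imp_no_topple_step in \<open>auto simp: R_def\<close>)
  obtain u where "R\<^sup>*\<^sup>* s1 u" "R\<^sup>*\<^sup>* s2 u"
    using confluentpD[OF confluent R_steps[OF assms(2)] R_steps[OF assms(4)]] by blast
  then have "s1 = u" "s2 = u" using stable_end assms(3,5) by blast+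
  then show ?thesis by simp
qed

lemma final_config_eqI:
  assumes "admissible lo hi c" "topple_step\<^sup>*\<^sup>* c s" "stable s"
  shows "final_config c = s"
  unfolding final_config_def
proof (rule the_equality)
  show "topple_step\<^sup>*\<^sup>* c s \<and> stable s" using assms(2,3) ..
  show "s' = s" if "topple_step\<^sup>*\<^sup>* c s' \<and> stable s'" for s'
    using that admissible_stable_descendant_unique[OF assms] by blast
qed

lemma final_config_stable_descendant:
  assumes "admissible lo hi c"
  shows "topple_step\<^sup>*\<^sup>* c (final_config c)" "stable (final_config c)"
proof -
  obtain s where "topple_step\<^sup>*\<^sup>* c s" "stable s"
    using admissible_stable_descendant[OF assms] by blast
  with final_config_eqI[OF assms this] show "topple_step\<^sup>*\<^sup>* c (final_config c)" "stable (final_config c)"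
    by simp_all
qed

definition prepend_one :: "config \<Rightarrow> config" where
  "prepend_one c = (\<lambda>i. if i = 0 then {#1#} else image_mset Suc (c (i - 1)))"

lemma topple_step_prepend_one:
  assumes "admissible 0 hi c" "topple_step c c'"
  shows "topple_step (prepend_one c) (prepend_one c')"
proof -
  obtain i a b where ab: "a < b" "c i = {#a, b#}" "c' = topple_at c i a b" "0 < i"
    using admissible_topple_stepE[OF assms] by metis
  have site: "prepend_one c (i + 1) = {#Suc a, Suc b#}" using ab unfolding prepend_one_def by auto
  have "prepend_one c' = topple_at (prepend_one c) (i + 1) (Suc a) (Suc b)"
    using ab site unfolding prepend_one_def topple_at_def by (auto simp: fun_eq_iff add.commute)
  then show ?thesis unfolding topple_step_iff using ab(1) site
    by (intro exI[of _ "i + 1"] exI[of _ "Suc a"] exI[of _ "Suc b"]) simp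
qed

lemma topple_steps_prepend_one:
  assumes "topple_step\<^sup>*\<^sup>* c c'" "admissible 0 hi c"
  shows "topple_step\<^sup>*\<^sup>* (prepend_one c) (prepend_one c')"
  using assms(1)
proof (induction rule: rtranclp_induct)
  case (step d d')
  then show ?case
    using topple_step_prepend_one[OF admissible_topple_steps[OF step.hyps(1) assms(2)]]
    by (meson rtranclp.rtrancl_into_rtrancl)
qed simp

lemma stable_prepend_one: "stable c \<Longrightarrow> stable (prepend_one c)"
  unfolding stable_def prepend_one_def by auto

lemma read_config_eq_concat:
  assumes "sorted L" "distinct L" "{i. c i \<noteq> {#}} \<subseteq> set L"
  shows "read_config c = concat (map (\<lambda>i. sorted_list_of_multiset (c i)) L)"
proof -
  have support: "{i. c i \<noteq> {#}} = set (filter (\<lambda>i. c i \<noteq> {#}) L)" using assms(3) by auto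
  have "sorted_list_of_set {i. c i \<noteq> {#}} = filter (\<lambda>i. c i \<noteq> {#}) L"
    unfolding support using assms(1,2)
    by (intro sorted_list_of_set.idem_if_sorted_distinct) (simp_all add: sorted_wrt_filter)
  moreover have "concat (map (\<lambda>i. sorted_list_of_multiset (c i)) (filter (\<lambda>i. c i \<noteq> {#}) L))
      = concat (map (\<lambda>i. sorted_list_of_multiset (c i)) L)"
    by (induction L) auto
  ultimately show ?thesis unfolding read_config_def by simp
qed

lemma read_config_prepend_one:
  assumes "stable c" "{i. c i \<noteq> {#}} \<subseteq> {0..hi}"
  shows "read_config (prepend_one c) = 1 # map Suc (read_config c)"
proof -
  define L where "L = map int [0..<nat (hi + 1)]"
  have L: "sorted L" "distinct L" "\<forall>i\<in>set L. 0 \<le> i"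
    unfolding L_def by (auto simp: sorted_map distinct_map)
  have "{0..hi} \<subseteq> set L"
    unfolding L_def by (auto simp: image_iff intro!: bexI[where x = "nat _"])
  then have supp: "{i. c i \<noteq> {#}} \<subseteq> set L" using assms(2) by blast
  have "sorted (0 # map (\<lambda>i. i + 1) L)" "distinct (0 # map (\<lambda>i. i + 1) L)"
    using L by (auto simp: sorted_map distinct_map)
  moreover have "{i. prepend_one c i \<noteq> {#}} \<subseteq> set (0 # map (\<lambda>i. i + 1) L)"
    using supp unfolding prepend_one_def by (force simp: image_iff)
  ultimately have "read_config (prepend_one c) =
      concat (map (\<lambda>i. sorted_list_of_multiset (prepend_one c i)) (0 # map (\<lambda>i. i + 1) L))"
    by (rule read_config_eq_concat)
  also have "\<dots> = 1 # concat (map (\<lambda>i. sorted_list_of_multiset (image_mset Suc (c i))) L)"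
  proof -
    have "map (\<lambda>i. sorted_list_of_multiset (prepend_one c i)) (0 # map (\<lambda>i. i + 1) L) =
        [1] # map (\<lambda>i. sorted_list_of_multiset (image_mset Suc (c i))) L"
      using L(3) by (auto simp: prepend_one_def)
    then show ?thesis by (simp only: concat.simps(2) append_Cons append_Nil)
  qed
  also have "\<dots> = 1 # concat (map (\<lambda>i. map Suc (sorted_list_of_multiset (c i))) L)"
  proof -
    have "sorted_list_of_multiset (image_mset Suc (c i)) = map Suc (sorted_list_of_multiset (c i))"
      for i
    proof -
      have "size (c i) \<le> 1" using assms(1) unfolding stable_def by blast
      then have "c i = {#} \<or> (\<exists>x. c i = {#x#})"
        by (metis One_nat_def le_Suc_eq le_zero_eq size_1_singleton_mset size_eq_0_iff_empty)
      then show ?thesis by auto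
    qed
    then show ?thesis by simp
  qed
  also have "\<dots> = 1 # map Suc (read_config c)"
    using read_config_eq_concat[OF L(1,2) supp] by (simp add: map_concat comp_def)
  finally show ?thesis .
qed

lemma admissible_of_sizes:
  assumes "1 \<le> p" "p \<le> m + 1" "distinct_chips c"
    and size_c: "\<And>i. size (c i) = (if 1 \<le> i \<and> i \<le> int m then 1 else 0) + (if i = int p then 1 else 0)"
  shows "admissible 0 (int m + 1) c"
proof -
  have below_m: "excess 0 c (int t) = (if t < p then -1 else 0)" if "t \<le> m" for t
    using that
  proof (induction t)
    case 0
    then show ?case using excess_step[of 0 0 c] size_c[of 0] assms(1) by (simp add: excess_below)
  next
    case (Suc t)
    then show ?case using excess_step[of 0 "int (Suc t)" c] size_c[of "int (Suc t)"] by auto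
  qed
  have last: "excess 0 c (int m + 1) = -1"
    using excess_step[of 0 "int m + 1" c] below_m[of m] size_c[of "int m + 1"] assms(2) by simp
  have excess_in: "excess 0 c j \<in> {-1, 0}" if "j \<in> {0..int m + 1}" for j
  proof (cases "j = int m + 1")
    case False
    then have "0 \<le> j" "j \<le> int m" using that by auto
    then obtain t where "j = int t" "t \<le> m" by (metis nonneg_int_cases of_nat_le_iff)
    then show ?thesis using below_m by simp
  qed (simp add: last)
  have support: "{i. c i \<noteq> {#}} \<subseteq> {0..int m + 1}"
  proof
    fix i
    assume "i \<in> {i. c i \<noteq> {#}}"
    then have "size (c i) \<noteq> 0" by simp
    then show "i \<in> {0..int m + 1}" using size_c[of i] assms(1,2) by (auto split: if_splits)
  qed
  show ?thesis unfolding admissible_def by (intro conjI ballI support excess_in last assms(3))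
qed

definition shift_up :: "nat \<Rightarrow> nat \<Rightarrow> nat" where
  "shift_up r v = (if v < r then v else v + 1)"

lemma init_config_eq:
  "init_config m r p \<pi> = (\<lambda>i. (if 1 \<le> i \<and> i \<le> int m then {#shift_up r (\<pi> (nat i))#} else {#})
     + (if i = int p then {#r#} else {#}))"
  unfolding init_config_def shift_up_def ..

lemma admissible_init_config:
  assumes "\<pi> permutes {1..m}" "1 \<le> p" "p \<le> m"
  shows "admissible 0 (int m + 1) (init_config m r p \<pi>)"
proof (rule admissible_of_sizes)
  have inj: "\<pi> u = \<pi> v \<Longrightarrow> u = v" for u v using permutes_inj[OF assms(1)] by (auto dest: injD)
  show "distinct_chips (init_config m r p \<pi>)"
    unfolding distinct_chips_def init_config_eq
    by (auto simp: shift_up_def split: if_splits dest!: inj)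
qed (use assms in \<open>auto simp: init_config_eq\<close>)

definition swept_config :: "nat \<Rightarrow> nat \<Rightarrow> (nat \<Rightarrow> nat) \<Rightarrow> config" where
  "swept_config n p \<pi> = (\<lambda>i. (if 1 \<le> i \<and> i \<le> int p then {#\<pi> (nat i)#} else {#})
      + (if int p \<le> i \<and> i \<le> int n - 1 then {#\<pi> (nat i + 1)#} else {#}))"

text \<open>Chip 1 at site \<open>p - k\<close>: it has swapped places with the chips \<open>\<pi> (p - k + 1) + 1, \<dots>, \<pi> p + 1\<close>.\<close>
definition sweep_config :: "nat \<Rightarrow> nat \<Rightarrow> (nat \<Rightarrow> nat) \<Rightarrow> nat \<Rightarrow> config" where
  "sweep_config n p \<pi> k = (\<lambda>i. (if i = int p - int k then {#1#} else {#})
     + (if 1 \<le> i \<and> i \<le> int p - int k then {#\<pi> (nat i) + 1#} else {#})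
     + (if int p - int k + 2 \<le> i \<and> i \<le> int p + 1 then {#\<pi> (nat i - 1) + 1#} else {#})
     + (if int p + 1 \<le> i \<and> i \<le> int n then {#\<pi> (nat i) + 1#} else {#}))"

lemma sweep_config_0:
  assumes "\<pi> permutes {1..n}" "p \<le> n"
  shows "sweep_config n p \<pi> 0 = init_config n 1 p \<pi>"
proof
  fix i
  have "1 \<le> \<pi> (nat i)" if "1 \<le> i" "i \<le> int n"
    using permutes_in_image[OF assms(1), of "nat i"] that by auto
  then show "sweep_config n p \<pi> 0 i = init_config n 1 p \<pi> i"
    unfolding sweep_config_def init_config_eq shift_up_def using assms(2) by (auto simp: add_ac)
qed

lemma sweep_config_end: "sweep_config n p \<pi> p = prepend_one (swept_config n p \<pi>)"
proof
  fix i :: int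
  consider "i = 0" | "i < 0" | "1 \<le> i" by linarith
  then show "sweep_config n p \<pi> p i = prepend_one (swept_config n p \<pi>) i"
  proof cases
    case 3
    then have "nat (i - 1) = nat i - 1" "nat (i - 1) + 1 = nat i" by auto
    then show ?thesis using 3 unfolding sweep_config_def prepend_one_def swept_config_def by auto
  qed (auto simp: sweep_config_def prepend_one_def swept_config_def)
qed

lemma topple_step_sweep_config:
  assumes "\<pi> permutes {1..n}" "p \<le> n" "k < p"
  shows "topple_step (sweep_config n p \<pi> k) (sweep_config n p \<pi> (Suc k))"
proof -
  define j where "j = int p - int k"
  have j: "1 \<le> j" "j \<le> int n" using assms(2,3) unfolding j_def by auto
  then have "1 \<le> \<pi> (nat j)" using permutes_in_image[OF assms(1), of "nat j"] by auto
  moreover have site: "sweep_config n p \<pi> k j = {#1, \<pi> (nat j) + 1#}"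
    unfolding sweep_config_def j_def using assms by auto
  moreover have "sweep_config n p \<pi> (Suc k) = topple_at (sweep_config n p \<pi> k) j 1 (\<pi> (nat j) + 1)"
  proof
    fix i
    consider "i = j" | "i = j - 1" | "i = j + 1" | "i \<noteq> j" "i \<noteq> j - 1" "i \<noteq> j + 1" by blast
    then show "sweep_config n p \<pi> (Suc k) i = topple_at (sweep_config n p \<pi> k) j 1 (\<pi> (nat j) + 1) i"
    proof cases
      case 3
      then have "nat i - 1 = nat j" using j by auto
      then show ?thesis using 3 site unfolding topple_at_def sweep_config_def j_def by (auto simp: add_ac)
    qed (use site in \<open>auto simp: topple_at_def sweep_config_def j_def add_ac\<close>)
  qed
  ultimately show ?thesis unfolding topple_step_iff
    by (intro exI[of _ j] exI[of _ 1] exI[of _ "\<pi> (nat j) + 1"]) simp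
qed

lemma init_config_one_sweeps:
  assumes "\<pi> permutes {1..n}" "p \<le> n"
  shows "topple_step\<^sup>*\<^sup>* (init_config n 1 p \<pi>) (prepend_one (swept_config n p \<pi>))"
proof -
  have "topple_step\<^sup>*\<^sup>* (sweep_config n p \<pi> 0) (sweep_config n p \<pi> k)" if "k \<le> p" for k
    using that
  proof (induction k)
    case (Suc k)
    then show ?case
      using topple_step_sweep_config[OF assms, of k] by (simp add: rtranclp.rtrancl_into_rtrancl)
  qed simp
  from this[of p] show ?thesis using sweep_config_0[OF assms] sweep_config_end by simp
qed

lemma admissible_swept_config:
  assumes "\<pi> permutes {1..n}" "1 \<le> p" "p \<le> n"
  shows "admissible 0 (int n) (swept_config n p \<pi>)"
proof -
  have inj: "\<pi> u = \<pi> v \<Longrightarrow> u = v" for u v using permutes_inj[OF assms(1)] by (auto dest: injD)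
  have "distinct_chips (swept_config n p \<pi>)"
    unfolding distinct_chips_def swept_config_def using inj[of "nat _" "nat _ + 1"]
    by (auto split: if_splits dest!: inj)
  moreover have "size (swept_config n p \<pi> i) =
      (if 1 \<le> i \<and> i \<le> int (n - 1) then 1 else 0) + (if i = int p then 1 else 0)" for i
    using assms(2,3) unfolding swept_config_def by auto
  ultimately show ?thesis using admissible_of_sizes[of p "n - 1"] assms(2,3) by force
qed

lemma read_final_config_init_one:
  assumes "\<pi> permutes {1..n}" "1 \<le> p" "p \<le> n"
  shows "read_config (final_config (init_config n 1 p \<pi>)) =
    1 # map Suc (read_config (final_config (swept_config n p \<pi>)))"
proof -
  note swept = admissible_swept_config[OF assms]
  note final = final_config_stable_descendant[OF swept]
  have "topple_step\<^sup>*\<^sup>* (init_config n 1 p \<pi>) (prepend_one (final_config (swept_config n p \<pi>)))"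
    using init_config_one_sweeps[OF assms(1,3)] topple_steps_prepend_one[OF final(1) swept]
    by (rule rtranclp_trans)
  then have "final_config (init_config n 1 p \<pi>) = prepend_one (final_config (swept_config n p \<pi>))"
    using final_config_eqI[OF admissible_init_config[OF assms]] stable_prepend_one[OF final(2)]
    by blast
  moreover have "{i. final_config (swept_config n p \<pi>) i \<noteq> {#}} \<subseteq> {0..int n}"
    using admissibleD(1)[OF admissible_topple_steps[OF final(1) swept]] by blast
  ultimately show ?thesis using read_config_prepend_one[OF final(2)] by simp
qed

lemma Tset_one_iff:
  assumes "\<pi> permutes {1..n}" "1 \<le> p" "p \<le> n"
  shows "\<pi> \<in> Tset n 1 p \<longleftrightarrow> read_config (final_config (swept_config n p \<pi>)) = [1..<n + 1]"
proof -
  have "\<pi> \<in> Tset n 1 p \<longleftrightarrow> read_config (final_config (init_config n 1 p \<pi>)) = [1..<n + 2]"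
    unfolding Tset_def using assms(1) by blast
  also have "[1..<n + 2] = 1 # map Suc [1..<n + 1]" by (simp add: map_Suc_upt upt_conv_Cons)
  also have "read_config (final_config (init_config n 1 p \<pi>)) = 1 # map Suc [1..<n + 1] \<longleftrightarrow>
      read_config (final_config (swept_config n p \<pi>)) = [1..<n + 1]"
    unfolding read_final_config_init_one[OF assms]
    by (simp only: list.inject inj_map_eq_map[OF inj_Suc] simp_thms)
  finally show ?thesis .
qed

lemma read_config_swept_config_last: "read_config (swept_config n n \<pi>) = map \<pi> [1..<n + 1]"
proof -
  have "read_config (swept_config n n \<pi>) =
      concat (map (\<lambda>i. sorted_list_of_multiset (swept_config n n \<pi> i)) (map int [1..<n + 1]))"
  proof (rule read_config_eq_concat)
    show "sorted (map int [1..<n + 1])" "distinct (map int [1..<n + 1])"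
      by (simp_all add: sorted_map distinct_map del: upt_Suc)
    show "{i. swept_config n n \<pi> i \<noteq> {#}} \<subseteq> set (map int [1..<n + 1])"
    proof
      fix i
      assume "i \<in> {i. swept_config n n \<pi> i \<noteq> {#}}"
      then have "1 \<le> i" "i \<le> int n" unfolding swept_config_def by (auto split: if_splits)
      then show "i \<in> set (map int [1..<n + 1])"
        by (auto simp del: upt_Suc intro!: image_eqI[of i int "nat i"])
    qed
  qed
  also have "\<dots> = concat (map (\<lambda>u. [\<pi> u]) [1..<n + 1])"
    unfolding map_map
    by (intro arg_cong[where f = concat] map_cong refl) (auto simp: swept_config_def simp del: upt_Suc)
  finally show ?thesis by simp
qed

lemma Tset_one_last:
  assumes "1 \<le> n"
  shows "Tset n 1 n = {id}"
proof -
  have iff: "\<pi> \<in> Tset n 1 n \<longleftrightarrow> \<pi> = id" if \<pi>: "\<pi> permutes {1..n}" for \<pi>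
  proof -
    have "stable (swept_config n n \<pi>)" unfolding stable_def swept_config_def by auto
    then have "final_config (swept_config n n \<pi>) = swept_config n n \<pi>"
      using final_config_eqI[OF admissible_swept_config[OF \<pi> assms order_refl]] by blast
    then have "\<pi> \<in> Tset n 1 n \<longleftrightarrow> map \<pi> [1..<n + 1] = map id [1..<n + 1]"
      using Tset_one_iff[OF \<pi> assms order_refl] read_config_swept_config_last by simp
    also have "\<dots> \<longleftrightarrow> \<pi> = id"
    proof
      assume "map \<pi> [1..<n + 1] = map id [1..<n + 1]"
      then have "\<pi> x = x" if "x \<in> {1..n}" for x
        using that unfolding map_eq_conv by (simp del: upt_Suc)
      then show "\<pi> = id" using permutes_not_in[OF \<pi>] by (auto simp: fun_eq_iff)
    qed simp
    finally show ?thesis .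
  qed
  show ?thesis
  proof (intro set_eqI iffI)
    fix \<pi>
    assume "\<pi> \<in> Tset n 1 n"
    then show "\<pi> \<in> {id}" using iff unfolding Tset_def by blast
  next
    fix \<pi> :: "nat \<Rightarrow> nat"
    assume "\<pi> \<in> {id}"
    then show "\<pi> \<in> Tset n 1 n" using iff[OF permutes_id] by simp
  qed
qed

definition shift_down :: "nat \<Rightarrow> nat \<Rightarrow> nat" where
  "shift_down r v = (if v < r then v else v - 1)"

lemma shift_down_shift_up [simp]: "shift_down r (shift_up r v) = v"
  unfolding shift_up_def shift_down_def by auto

lemma shift_up_shift_down: "v \<noteq> r \<Longrightarrow> shift_up r (shift_down r v) = v"
  unfolding shift_up_def shift_down_def by auto

definition insert_at :: "nat \<Rightarrow> nat \<Rightarrow> nat \<Rightarrow> (nat \<Rightarrow> nat) \<Rightarrow> nat \<Rightarrow> nat" where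
  "insert_at n p r \<sigma> i =
     (if 1 \<le> i \<and> i \<le> p then shift_up r (\<sigma> i)
      else if i = p + 1 then r
      else if p + 2 \<le> i \<and> i \<le> n then shift_up r (\<sigma> (i - 1))
      else i)"

definition delete_at :: "nat \<Rightarrow> nat \<Rightarrow> (nat \<Rightarrow> nat) \<Rightarrow> nat \<Rightarrow> nat" where
  "delete_at n p \<pi> i =
     (if 1 \<le> i \<and> i \<le> p then shift_down (\<pi> (p + 1)) (\<pi> i)
      else if p + 1 \<le> i \<and> i \<le> n - 1 then shift_down (\<pi> (p + 1)) (\<pi> (i + 1))
      else i)"

lemma insert_at_permutes:
  assumes "\<sigma> permutes {1..n - 1}" "p \<le> n - 1" "r \<in> {1..n}"
  shows "insert_at n p r \<sigma> permutes {1..n}"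
proof (rule inj_imp_permutes)
  have range: "\<sigma> u \<in> {1..n - 1}" if "u \<in> {1..n - 1}" for u
    using permutes_in_image[OF assms(1)] that by blast
  have inj: "\<sigma> u = \<sigma> v \<Longrightarrow> u = v" for u v using permutes_inj[OF assms(1)] by (auto dest: injD)
  have shift_up_inj: "shift_up r x = shift_up r y \<Longrightarrow> x = y" for x y
    unfolding shift_up_def by (auto split: if_splits)
  have shift_up_ne: "shift_up r x \<noteq> r" for x unfolding shift_up_def by auto
  show "inj_on (insert_at n p r \<sigma>) {1..n}"
  proof (rule inj_onI)
    fix u v
    assume "u \<in> {1..n}" "v \<in> {1..n}" "insert_at n p r \<sigma> u = insert_at n p r \<sigma> v"
    then show "u = v" unfolding insert_at_def using assms(2)
      by (auto split: if_splits dest!: shift_up_inj inj simp: shift_up_ne shift_up_ne[symmetric])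
  qed
  have shift_up_range: "shift_up r v \<in> {1..n}" if "v \<in> {1..n - 1}" for v
    using that unfolding shift_up_def by auto
  show "insert_at n p r \<sigma> x \<in> {1..n}" if x: "x \<in> {1..n}" for x
  proof -
    consider "x \<le> p" | "x = p + 1" | "p + 2 \<le> x" by linarith
    then show ?thesis
    proof cases
      case 1
      then show ?thesis using x assms(2) shift_up_range[OF range[of x]] unfolding insert_at_def by auto
    next
      case 3
      then have "x - 1 \<in> {1..n - 1}" using x by auto
      then show ?thesis using 3 x shift_up_range[OF range] unfolding insert_at_def by auto
    qed (use assms(3) in \<open>simp add: insert_at_def\<close>)
  qed
  show "insert_at n p r \<sigma> x = x" if "x \<notin> {1..n}" for x
    using that assms(2,3) unfolding insert_at_def by auto
qed simp

lemma delete_at_permutes: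
  assumes "\<pi> permutes {1..n}" "p + 1 \<le> n"
  shows "delete_at n p \<pi> permutes {1..n - 1}"
proof (rule inj_imp_permutes)
  define r where "r = \<pi> (p + 1)"
  have range: "\<pi> u \<in> {1..n}" if "u \<in> {1..n}" for u
    using permutes_in_image[OF assms(1)] that by blast
  have inj: "\<pi> u = \<pi> v \<Longrightarrow> u = v" for u v using permutes_inj[OF assms(1)] by (auto dest: injD)
  then have ne_r: "\<pi> u \<noteq> r" if "u \<noteq> p + 1" for u using that unfolding r_def by metis
  have shift_down_inj: "x = y" if "x \<noteq> r" "y \<noteq> r" "shift_down r x = shift_down r y" for x y
    using that unfolding shift_down_def by (auto split: if_splits)
  have "\<pi> u = \<pi> v" if "u \<noteq> p + 1" "v \<noteq> p + 1" "shift_down r (\<pi> u) = shift_down r (\<pi> v)" for u v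
    using shift_down_inj[OF ne_r ne_r] that by blast
  note shift_down_\<pi>_inj = inj[OF this]
  show "inj_on (delete_at n p \<pi>) {1..n - 1}"
  proof (rule inj_onI)
    fix u v
    assume "u \<in> {1..n - 1}" "v \<in> {1..n - 1}" "delete_at n p \<pi> u = delete_at n p \<pi> v"
    then show "u = v" unfolding delete_at_def r_def[symmetric]
      using shift_down_\<pi>_inj[of u v] shift_down_\<pi>_inj[of "Suc u" v] shift_down_\<pi>_inj[of u "Suc v"]
        shift_down_\<pi>_inj[of "Suc u" "Suc v"]
      by (auto split: if_splits)
  qed
  have "r \<in> {1..n}" unfolding r_def using range assms(2) by simp
  then have "shift_down r v \<in> {1..n - 1}" if "v \<in> {1..n}" "v \<noteq> r" for v
    using that unfolding shift_down_def by auto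
  then show "delete_at n p \<pi> x \<in> {1..n - 1}" if "x \<in> {1..n - 1}" for x
    using that range ne_r unfolding delete_at_def r_def[symmetric] by auto
  show "delete_at n p \<pi> x = x" if "x \<notin> {1..n - 1}" for x
    using that assms(2) unfolding delete_at_def by auto
qed simp

lemma insert_at_delete_at:
  assumes "\<pi> permutes {1..n}" "p + 1 \<le> n"
  shows "insert_at n p (\<pi> (p + 1)) (delete_at n p \<pi>) = \<pi>"
proof
  fix i
  have inj: "\<pi> u = \<pi> v \<Longrightarrow> u = v" for u v using permutes_inj[OF assms(1)] by (auto dest: injD)
  then have "\<pi> u \<noteq> \<pi> (p + 1)" if "u \<noteq> p + 1" for u using that by metis
  moreover have "\<pi> i = i" if "i \<notin> {1..n}" using permutes_not_in[OF assms(1) that] .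
  ultimately show "insert_at n p (\<pi> (p + 1)) (delete_at n p \<pi>) i = \<pi> i"
    unfolding insert_at_def delete_at_def using assms(2) by (auto simp: shift_up_shift_down)
qed

lemma delete_at_insert_at:
  assumes "\<sigma> permutes {1..n - 1}" "p + 1 \<le> n"
  shows "delete_at n p (insert_at n p r \<sigma>) = \<sigma>"
proof
  fix i
  have "\<sigma> i = i" if "i \<notin> {1..n - 1}" using permutes_not_in[OF assms(1) that] .
  then show "delete_at n p (insert_at n p r \<sigma>) i = \<sigma> i"
    unfolding insert_at_def delete_at_def using assms(2) by auto
qed

lemma swept_config_insert_at:
  assumes "1 \<le> p" "p + 1 \<le> n"
  shows "swept_config n p (insert_at n p r \<sigma>) = init_config (n - 1) r p \<sigma>"
  unfolding swept_config_def init_config_eq using assms by (auto simp: fun_eq_iff insert_at_def)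

lemma insert_at_in_Tset_iff:
  assumes "\<sigma> permutes {1..n - 1}" "1 \<le> p" "p + 1 \<le> n" "r \<in> {1..n}"
  shows "insert_at n p r \<sigma> \<in> Tset n 1 p \<longleftrightarrow> \<sigma> \<in> Tset (n - 1) r p"
proof -
  have "p \<le> n - 1" using assms(3) by simp
  note perm = insert_at_permutes[OF assms(1) this assms(4)]
  have "n - 1 + 2 = n + 1" using assms(3) by simp
  have "insert_at n p r \<sigma> \<in> Tset n 1 p \<longleftrightarrow>
      read_config (final_config (swept_config n p (insert_at n p r \<sigma>))) = [1..<n + 1]"
    using Tset_one_iff[OF perm assms(2)] assms(3) by simp
  also have "\<dots> \<longleftrightarrow> read_config (final_config (init_config (n - 1) r p \<sigma>)) = [1..<n - 1 + 2]"
    unfolding swept_config_insert_at[OF assms(2,3)] \<open>n - 1 + 2 = n + 1\<close> ..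
  also have "\<dots> \<longleftrightarrow> \<sigma> \<in> Tset (n - 1) r p"
    unfolding Tset_def using assms(1) by blast
  finally show ?thesis .
qed

lemma Tset_fiber_bij:
  assumes "1 \<le> p" "p + 1 \<le> n" "r \<in> {1..n}"
  shows "bij_betw (insert_at n p r) (Tset (n - 1) r p) {\<pi> \<in> Tset n 1 p. \<pi> (p + 1) = r}"
proof (rule bij_betw_byWitness[where f' = "delete_at n p"])
  show "\<forall>\<sigma>\<in>Tset (n - 1) r p. delete_at n p (insert_at n p r \<sigma>) = \<sigma>"
    using delete_at_insert_at assms(2) unfolding Tset_def by blast
  show "\<forall>\<pi>\<in>{\<pi> \<in> Tset n 1 p. \<pi> (p + 1) = r}. insert_at n p r (delete_at n p \<pi>) = \<pi>"
    using insert_at_delete_at assms(2) unfolding Tset_def by blast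
  show "insert_at n p r ` Tset (n - 1) r p \<subseteq> {\<pi> \<in> Tset n 1 p. \<pi> (p + 1) = r}"
  proof (rule image_subsetI)
    fix \<sigma>
    assume \<sigma>: "\<sigma> \<in> Tset (n - 1) r p"
    then have "\<sigma> permutes {1..n - 1}" unfolding Tset_def by blast
    then show "insert_at n p r \<sigma> \<in> {\<pi> \<in> Tset n 1 p. \<pi> (p + 1) = r}"
      using insert_at_in_Tset_iff[OF _ assms] \<sigma> by (simp add: insert_at_def)
  qed
  show "delete_at n p ` {\<pi> \<in> Tset n 1 p. \<pi> (p + 1) = r} \<subseteq> Tset (n - 1) r p"
  proof clarify
    fix \<pi>
    assume \<pi>: "\<pi> \<in> Tset n 1 p" "r = \<pi> (p + 1)"
    then have perm: "\<pi> permutes {1..n}" unfolding Tset_def by blast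
    have del: "delete_at n p \<pi> permutes {1..n - 1}" using delete_at_permutes[OF perm assms(2)] .
    have "insert_at n p r (delete_at n p \<pi>) = \<pi>" using insert_at_delete_at[OF perm assms(2)] \<pi>(2) by simp
    then show "delete_at n p \<pi> \<in> Tset (n - 1) (\<pi> (p + 1)) p"
      using insert_at_in_Tset_iff[OF del assms] \<pi> by simp
  qed
qed

lemma card_Tset_one:
  assumes "1 \<le> p" "p + 1 \<le> n"
  shows "card (Tset n 1 p) = (\<Sum>r = 1..n. card (Tset (n - 1) r p))"
proof -
  have "finite (Tset n 1 p)"
    by (rule finite_subset[of _ "{\<pi>. \<pi> permutes {1..n}}"]) (auto simp: Tset_def finite_permutations)
  moreover have "(\<lambda>\<pi>. \<pi> (p + 1)) ` Tset n 1 p \<subseteq> {1..n}"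
    using permutes_in_image assms(2) unfolding Tset_def by fastforce
  ultimately have "card (Tset n 1 p) = (\<Sum>r = 1..n. card {\<pi> \<in> Tset n 1 p. \<pi> (p + 1) = r})"
    using sum.group[of "Tset n 1 p" "{1..n}" "\<lambda>\<pi>. \<pi> (p + 1)" "\<lambda>_. 1::nat"] by simp
  also have "\<dots> = (\<Sum>r = 1..n. card (Tset (n - 1) r p))"
    using bij_betw_same_card[OF Tset_fiber_bij[OF assms]] by simp
  finally show ?thesis .
qed

theorem proposition4p6:
  shows "(\<forall>n::nat. n \<ge> 1 \<longrightarrow> card (Tset n 1 n) = 1) \<and>
         (\<forall>n p::nat. n \<ge> 2 \<and> 1 \<le> p \<and> p \<le> n - 1 \<longrightarrow>
            card (Tset n 1 p) = (\<Sum>r = 1..n. card (Tset (n - 1) r p)))"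
proof (intro conjI allI impI)
  fix n :: nat
  assume "n \<ge> 1"
  then show "card (Tset n 1 n) = 1" using Tset_one_last by simp
next
  fix n p :: nat
  assume "n \<ge> 2 \<and> 1 \<le> p \<and> p \<le> n - 1"
  then show "card (Tset n 1 p) = (\<Sum>r = 1..n. card (Tset (n - 1) r p))"
    by (intro card_Tset_one) auto
qed

end
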